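(* Let $X=\{a,\dots,b\}\subseteq\mathbb{N}$ and let $f^p:\mathcal{P}^n\to X$ be a non-dictatorial generalized median voter scheme with monotonic family of fixed ballots $p=\{p_S\}_{S\in 2^N}$. Then $f^p$ is NOM if and only if, for each $i\in N$, $p_{N\setminus\{i\}}\in\{a,a+1\}$ and $p_{\{i\}}\in\{b-1,b\}$.
   Context: $N=\{1,\dots,n\}$, $n\ge2$; $X=\{a,a+1,\dots,b\}$, $|X|\ge2$; $\mathcal{P}$ all strict linear orders on $X$; $t(P_i)$ the top of $P_i$. A monotonic family of fixed ballots is $p=\{p_S\}_{S\subseteq N}$ with $p_S\in X$, $p_N=a$, $p_\emptyset=b$, and $p_Q\le p_T$ whenever $T\subseteq Q$. The generalized median voter scheme is $f^p(P)=\min_{S\subseteq N}\max_{j\in S}\{t(P_j),p_S\}$. A rule is dictatorial if there is $i$ with $f(P)=t(P_i)$ for all $P$. Option set $O(P_i)=\{f(P_i,P_{-i}):P_{-i}\in\mathcal{P}^{n-1}\}$. $P_i'$ is a manipulation at $P_i$ if $f(P_i',P_{-i})P_if(P_i,P_{-i})$ for some $P_{-i}$; it is obvious if the $P_i$-worst element of $O(P_i')$ is strictly $P_i$-better than that of $O(P_i)$, or the $P_i$-best element of $O(P_i')$ is strictly $P_i$-better than that of $O(P_i)$. NOM means no obvious manipulation exists. *)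

theory Defs
  imports Main
begin

text \<open>A preference is a strict linear order on X, represented as a relation
  (x,y) \<in> R meaning "x is strictly preferred to y".  A profile is a
  function from voters to preferences (values outside N are irrelevant).\<close>

definition voters :: "nat \<Rightarrow> nat set" where
  "voters n = {1..n}"

definition is_pref :: "nat set \<Rightarrow> (nat \<times> nat) set \<Rightarrow> bool" where
  "is_pref X R \<longleftrightarrow> R \<subseteq> X \<times> X \<and> strict_linear_order_on X R"

definition is_profile :: "nat \<Rightarrow> nat set \<Rightarrow> (nat \<Rightarrow> (nat \<times> nat) set) \<Rightarrow> bool" where
  "is_profile n X P \<longleftrightarrow> (\<forall>i\<in>voters n. is_pref X (P i))"

definition top :: "nat set \<Rightarrow> (nat \<times> nat) set \<Rightarrow> nat" where
  "top X R = (THE x. x \<in> X \<and> (\<forall>y\<in>X. y \<noteq> x \<longrightarrow> (x, y) \<in> R))"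

definition best_el :: "(nat \<times> nat) set \<Rightarrow> nat set \<Rightarrow> nat" where
  "best_el R A = (THE x. x \<in> A \<and> (\<forall>y\<in>A. y \<noteq> x \<longrightarrow> (x, y) \<in> R))"

definition worst_el :: "(nat \<times> nat) set \<Rightarrow> nat set \<Rightarrow> nat" where
  "worst_el R A = (THE x. x \<in> A \<and> (\<forall>y\<in>A. y \<noteq> x \<longrightarrow> (y, x) \<in> R))"

definition monotonic_ballots :: "nat \<Rightarrow> nat \<Rightarrow> nat \<Rightarrow> (nat set \<Rightarrow> nat) \<Rightarrow> bool" where
  "monotonic_ballots n a b p \<longleftrightarrow>
     (\<forall>S. S \<subseteq> voters n \<longrightarrow> p S \<in> {a..b}) \<and>
     p (voters n) = a \<and> p {} = b \<and>
     (\<forall>Q T. Q \<subseteq> voters n \<longrightarrow> T \<subseteq> Q \<longrightarrow> p Q \<le> p T)"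

definition gmvs :: "nat \<Rightarrow> nat set \<Rightarrow> (nat set \<Rightarrow> nat) \<Rightarrow> (nat \<Rightarrow> (nat \<times> nat) set) \<Rightarrow> nat" where
  "gmvs n X p P = Min ((\<lambda>S. Max (insert (p S) ((\<lambda>j. top X (P j)) ` S))) ` Pow (voters n))"

definition dictatorial :: "nat \<Rightarrow> nat set \<Rightarrow> ((nat \<Rightarrow> (nat \<times> nat) set) \<Rightarrow> nat) \<Rightarrow> bool" where
  "dictatorial n X f \<longleftrightarrow>
     (\<exists>i\<in>voters n. \<forall>P. is_profile n X P \<longrightarrow> f P = top X (P i))"

definition option_set :: "nat \<Rightarrow> nat set \<Rightarrow> ((nat \<Rightarrow> (nat \<times> nat) set) \<Rightarrow> nat)
    \<Rightarrow> nat \<Rightarrow> (nat \<times> nat) set \<Rightarrow> nat set" where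
  "option_set n X f i R = {f (P(i := R)) | P. is_profile n X P}"

definition manipulation :: "nat \<Rightarrow> nat set \<Rightarrow> ((nat \<Rightarrow> (nat \<times> nat) set) \<Rightarrow> nat)
    \<Rightarrow> nat \<Rightarrow> (nat \<times> nat) set \<Rightarrow> (nat \<times> nat) set \<Rightarrow> bool" where
  "manipulation n X f i R R' \<longleftrightarrow>
     (\<exists>P. is_profile n X P \<and> (f (P(i := R')), f (P(i := R))) \<in> R)"

definition obvious_manipulation :: "nat \<Rightarrow> nat set \<Rightarrow> ((nat \<Rightarrow> (nat \<times> nat) set) \<Rightarrow> nat)
    \<Rightarrow> nat \<Rightarrow> (nat \<times> nat) set \<Rightarrow> (nat \<times> nat) set \<Rightarrow> bool" where
  "obvious_manipulation n X f i R R' \<longleftrightarrow>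
     manipulation n X f i R R' \<and>
     ((worst_el R (option_set n X f i R'), worst_el R (option_set n X f i R)) \<in> R \<or>
      (best_el R (option_set n X f i R'), best_el R (option_set n X f i R)) \<in> R)"

definition NOM :: "nat \<Rightarrow> nat set \<Rightarrow> ((nat \<Rightarrow> (nat \<times> nat) set) \<Rightarrow> nat) \<Rightarrow> bool" where
  "NOM n X f \<longleftrightarrow>
     \<not> (\<exists>i\<in>voters n. \<exists>R R'. is_pref X R \<and> is_pref X R' \<and> obvious_manipulation n X f i R R')"

end

theory Submission
  imports Defs
begin

text \<open>Write \<open>L = p (N - {i})\<close> and \<open>U = p {i}\<close>. If voter \<open>i\<close> reports a top \<open>t\<close>, the
  other voters can force every outcome in \<open>[min t L, max t U]\<close> (by all reporting it as their
  top) and nothing else, so this interval is the option set of \<open>i\<close>. When \<open>L \<le> a + 1\<close> and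
  \<open>U \<ge> b - 1\<close>, changing the reported top can remove no option except \<open>t\<close> itself, so neither
  the best nor the worst option improves. Otherwise, say \<open>L > a + 1\<close>, a preference with a
  suitable top \<open>t\<close> and bottom \<open>s\<close> has \<open>s\<close> among its options while another top \<open>t'\<close> excludes
  \<open>s\<close>, which improves the worst option; the one configuration where this fails,
  \<open>L = b\<close> and \<open>U = a\<close>, makes \<open>i\<close> a dictator.\<close>

lemma is_pref_converse: "is_pref X R \<Longrightarrow> is_pref X (R\<inverse>)"
  unfolding is_pref_def strict_linear_order_on_def by auto

lemma is_pref_asym: "is_pref X R \<Longrightarrow> asym R"
  unfolding is_pref_def strict_linear_order_on_def
  by (meson asymI irrefl_def transD)

lemma best_el_eqI:
  assumes "is_pref X R" "x \<in> A" "\<forall>y\<in>A. y \<noteq> x \<longrightarrow> (x, y) \<in> R"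
  shows "best_el R A = x"
  unfolding best_el_def
proof (rule the_equality)
  fix x' assume x': "x' \<in> A \<and> (\<forall>y\<in>A. y \<noteq> x' \<longrightarrow> (x', y) \<in> R)"
  show "x' = x"
  proof (rule ccontr)
    assume "x' \<noteq> x"
    then have "(x', x) \<in> R" "(x, x') \<in> R"
      using x' assms(2,3) by auto
    then show False
      using asymD[OF is_pref_asym[OF assms(1)]] by blast
  qed
qed (use assms in blast)

lemma best_el_best:
  assumes "is_pref X R" "finite X" "A \<subseteq> X" "A \<noteq> {}"
  shows "best_el R A \<in> A \<and> (\<forall>y\<in>A. y \<noteq> best_el R A \<longrightarrow> (best_el R A, y) \<in> R)"
proof -
  have "finite R" "trans R" "irrefl R" "total_on X R"
    using assms(1,2) finite_subset[of R "X \<times> X"]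
    unfolding is_pref_def strict_linear_order_on_def by auto
  then have "wf R"
    by (simp add: finite_acyclic_wf acyclic_irrefl)
  then obtain z where z: "z \<in> A" "\<And>y. (y, z) \<in> R \<Longrightarrow> y \<notin> A"
    using assms(4) by (meson wfE_min')
  then have "\<forall>y\<in>A. y \<noteq> z \<longrightarrow> (z, y) \<in> R"
    using \<open>total_on X R\<close> assms(3) unfolding total_on_def by blast
  then show ?thesis
    using best_el_eqI[OF assms(1) z(1)] z(1) by simp
qed

lemma worst_el_eq_best_el_converse: "worst_el R A = best_el (R\<inverse>) A"
  unfolding worst_el_def best_el_def by simp

lemma worst_el_eqI:
  assumes "is_pref X R" "x \<in> A" "\<forall>y\<in>A. y \<noteq> x \<longrightarrow> (y, x) \<in> R"
  shows "worst_el R A = x"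
  unfolding worst_el_eq_best_el_converse
  using best_el_eqI[OF is_pref_converse[OF assms(1)]] assms(2,3) by simp

lemma worst_el_worst:
  assumes "is_pref X R" "finite X" "A \<subseteq> X" "A \<noteq> {}"
  shows "worst_el R A \<in> A \<and> (\<forall>y\<in>A. y \<noteq> worst_el R A \<longrightarrow> (y, worst_el R A) \<in> R)"
  unfolding worst_el_eq_best_el_converse
  using best_el_best[OF is_pref_converse[OF assms(1)] assms(2-4)] by simp

lemma top_eq_best_el: "top X R = best_el R X"
  unfolding top_def best_el_def ..

lemma top_top:
  assumes "is_pref X R" "finite X" "X \<noteq> {}"
  shows "top X R \<in> X \<and> (\<forall>y\<in>X. y \<noteq> top X R \<longrightarrow> (top X R, y) \<in> R)"
  unfolding top_eq_best_el using best_el_best[OF assms(1,2) _ assms(3)] by simp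

lemma not_pref_over_top:
  assumes "is_pref X R" "finite X" "X \<noteq> {}"
  shows "(x, top X R) \<notin> R"
proof
  assume xt: "(x, top X R) \<in> R"
  then have "x \<in> X" "(top X R, x) \<notin> R"
    using assms(1) asymD[OF is_pref_asym[OF assms(1)]] unfolding is_pref_def by blast+
  then show False
    using xt top_top[OF assms] by (cases "x = top X R") auto
qed

lemma worst_el_not_pref_over:
  assumes "is_pref X R" "finite X" "B \<subseteq> X" "z \<in> B" "z = w \<or> (w, z) \<in> R"
  shows "(worst_el R B, w) \<notin> R"
proof
  assume vw: "(worst_el R B, w) \<in> R"
  have "trans R" "asym R"
    using assms(1) is_pref_asym unfolding is_pref_def strict_linear_order_on_def by auto
  have "z = worst_el R B \<or> (z, worst_el R B) \<in> R"
    using worst_el_worst[OF assms(1-3)] assms(4) by blast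
  then have zw: "(z, w) \<in> R"
    using vw \<open>trans R\<close> by (meson transD)
  then have "(w, z) \<notin> R"
    using asymD[OF \<open>asym R\<close>] by blast
  then show False
    using assms(5) zw by auto
qed

text \<open>Ranks \<open>t\<close> first, \<open>s\<close> last and the other alternatives in increasing order.\<close>

definition pref_top_bottom :: "nat set \<Rightarrow> nat \<Rightarrow> nat \<Rightarrow> (nat \<times> nat) set" where
  "pref_top_bottom X t s =
     {(x, y) \<in> X \<times> X. x \<noteq> y \<and> (x = t \<or> y \<noteq> t \<and> (y = s \<or> x \<noteq> s \<and> x < y))}"

lemma is_pref_pref_top_bottom: "is_pref X (pref_top_bottom X t s)"
  unfolding is_pref_def strict_linear_order_on_def pref_top_bottom_def
    trans_def irrefl_def total_on_def
  by auto

lemma top_pref_top_bottom: "t \<in> X \<Longrightarrow> top X (pref_top_bottom X t s) = t"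
  unfolding top_eq_best_el
  by (rule best_el_eqI[OF is_pref_pref_top_bottom]) (auto simp: pref_top_bottom_def)

lemma pref_top_bottom_bottom:
  "s \<noteq> t \<Longrightarrow> s \<in> X \<Longrightarrow> y \<in> X \<Longrightarrow> y \<noteq> s \<Longrightarrow> (y, s) \<in> pref_top_bottom X t s"
  unfolding pref_top_bottom_def by auto

lemma option_setI: "is_profile n X P \<Longrightarrow> f (P(i := R)) \<in> option_set n X f i R"
  unfolding option_set_def by blast

lemma gmvs_le:
  assumes "S \<subseteq> voters n" "p S \<le> c" "\<And>j. j \<in> S \<Longrightarrow> top X (P j) \<le> c"
  shows "gmvs n X p P \<le> c"
proof -
  have "finite S"
    using assms(1) finite_subset unfolding voters_def by blast
  have "gmvs n X p P \<le> Max (insert (p S) ((\<lambda>j. top X (P j)) ` S))"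
    unfolding gmvs_def using assms(1) by (intro Min_le) (auto simp: voters_def)
  also have "\<dots> \<le> c"
    using \<open>finite S\<close> assms(2,3) by simp
  finally show ?thesis .
qed

lemma le_gmvs:
  assumes "\<And>S. S \<subseteq> voters n \<Longrightarrow> c \<le> p S \<or> (\<exists>j\<in>S. c \<le> top X (P j))"
  shows "c \<le> gmvs n X p P"
  unfolding gmvs_def
proof (rule Min.boundedI)
  fix m assume "m \<in> (\<lambda>S. Max (insert (p S) ((\<lambda>j. top X (P j)) ` S))) ` Pow (voters n)"
  then obtain S where S: "S \<subseteq> voters n" and m: "m = Max (insert (p S) ((\<lambda>j. top X (P j)) ` S))"
    by blast
  have "finite S"
    using S finite_subset unfolding voters_def by blast
  then show "c \<le> m"
    unfolding m using assms[OF S] by (auto simp: Max_ge_iff)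
qed (auto simp: voters_def)

locale monotonic_ballot_scheme =
  fixes n a b :: nat and p :: "nat set \<Rightarrow> nat"
  assumes a_le_b: "a \<le> b" and monotonic: "monotonic_ballots n a b p"
begin

lemma ballot_range: "S \<subseteq> voters n \<Longrightarrow> p S \<in> {a..b}"
  using monotonic unfolding monotonic_ballots_def by blast

lemma ballot_antimono: "T \<subseteq> Q \<Longrightarrow> Q \<subseteq> voters n \<Longrightarrow> p Q \<le> p T"
  using monotonic unfolding monotonic_ballots_def by blast

lemma ballot_voters: "p (voters n) = a"
  and ballot_empty: "p {} = b"
  using monotonic unfolding monotonic_ballots_def by blast+

lemma gmvs_between:
  assumes "i \<in> voters n"
  shows "min (top X (P i)) (p (voters n - {i})) \<le> gmvs n X p P"
    and "gmvs n X p P \<le> max (top X (P i)) (p {i})"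
proof -
  show "min (top X (P i)) (p (voters n - {i})) \<le> gmvs n X p P"
  proof (rule le_gmvs)
    fix S assume S: "S \<subseteq> voters n"
    show "min (top X (P i)) (p (voters n - {i})) \<le> p S \<or>
        (\<exists>j\<in>S. min (top X (P i)) (p (voters n - {i})) \<le> top X (P j))"
    proof (cases "i \<in> S")
      case False
      then have "p (voters n - {i}) \<le> p S"
        using S by (intro ballot_antimono) auto
      then show ?thesis by (simp add: min_le_iff_disj)
    qed (metis min.cobounded1)
  qed
  show "gmvs n X p P \<le> max (top X (P i)) (p {i})"
    using assms by (intro gmvs_le[of "{i}"]) auto
qed

lemma gmvs_two_tops:
  assumes i: "i \<in> voters n" and t: "t \<in> {a..b}"
    and top_i: "top X (P i) = t" and top_others: "\<And>j. j \<noteq> i \<Longrightarrow> top X (P j) = y"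
  shows "gmvs n X p P = min (max t y) (min (max (p (voters n - {i})) y) (max (p {i}) t))"
    (is "_ = ?c")
proof (rule antisym)
  have tops: "top X (P j) = (if j = i then t else y)" for j
    using top_i top_others by simp
  have "gmvs n X p P \<le> max t y"
    using ballot_voters t by (intro gmvs_le[of "voters n"]) (auto simp: tops)
  moreover have "gmvs n X p P \<le> max (p (voters n - {i})) y"
    by (intro gmvs_le[of "voters n - {i}"]) (auto simp: tops)
  moreover have "gmvs n X p P \<le> max (p {i}) t"
    using i by (intro gmvs_le[of "{i}"]) (auto simp: tops)
  ultimately show "gmvs n X p P \<le> ?c"
    by simp
  show "?c \<le> gmvs n X p P"
  proof (rule le_gmvs)
    fix S assume S: "S \<subseteq> voters n"
    have c_le: "?c \<le> max t y" "?c \<le> max (p (voters n - {i})) y" "?c \<le> max (p {i}) t"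
      by simp_all
    consider "S = {}" | "S = {i}" | j where "i \<in> S" "j \<in> S" "j \<noteq> i"
      | j where "i \<notin> S" "j \<in> S"
      by blast
    then show "?c \<le> p S \<or> (\<exists>j\<in>S. ?c \<le> top X (P j))"
    proof cases
      case 1
      have "max (p {i}) t \<le> p S"
        using 1 ballot_empty ballot_range[of "{i}"] i t by simp
      then show ?thesis
        using order.trans[OF c_le(3)] by blast
    next
      case 2
      then show ?thesis
        using c_le(3) top_i by (auto simp: le_max_iff_disj)
    next
      case (3 j)
      then show ?thesis
        using c_le(1) top_i top_others[of j] by (auto simp: le_max_iff_disj)
    next
      case (4 j)
      have "p (voters n - {i}) \<le> p S"
        using S 4 by (intro ballot_antimono) auto
      then show ?thesis
        using 4 c_le(2) top_others[of j] by (auto simp: le_max_iff_disj)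
    qed
  qed
qed

lemma finite_nonempty_alternatives: "finite {a..b}" "{a..b} \<noteq> {}"
  using a_le_b by simp_all

lemma is_profile_const_top: "is_profile n {a..b} (\<lambda>j. pref_top_bottom {a..b} y y)"
  unfolding is_profile_def by (simp add: is_pref_pref_top_bottom)

lemma option_set_gmvs:
  assumes i: "i \<in> voters n" and R: "is_pref {a..b} R"
  shows "option_set n {a..b} (gmvs n {a..b} p) i R =
    {min (top {a..b} R) (p (voters n - {i})) .. max (top {a..b} R) (p {i})}"
proof (intro equalityI subsetI)
  fix x assume "x \<in> option_set n {a..b} (gmvs n {a..b} p) i R"
  then show "x \<in> {min (top {a..b} R) (p (voters n - {i})) .. max (top {a..b} R) (p {i})}"
    unfolding option_set_def using gmvs_between[OF i, of "{a..b}" "P(i := R)" for P] by auto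
next
  let ?t = "top {a..b} R"
  fix x assume x: "x \<in> {min ?t (p (voters n - {i})) .. max ?t (p {i})}"
  have t: "?t \<in> {a..b}"
    using top_top[OF R finite_nonempty_alternatives] by blast
  then have "x \<in> {a..b}"
    using x ballot_range[of "voters n - {i}"] ballot_range[of "{i}"] i by auto
  then have "gmvs n {a..b} p ((\<lambda>j. pref_top_bottom {a..b} x x)(i := R)) =
      min (max ?t x) (min (max (p (voters n - {i})) x) (max (p {i}) ?t))"
    by (intro gmvs_two_tops[OF i t]) (simp_all add: top_pref_top_bottom)
  also have "\<dots> = x"
    using x by auto
  finally show "x \<in> option_set n {a..b} (gmvs n {a..b} p) i R"
    using option_setI[OF is_profile_const_top] by metis
qed

lemma option_set_gmvs_subset:
  assumes "i \<in> voters n" "is_pref {a..b} R"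
  shows "option_set n {a..b} (gmvs n {a..b} p) i R \<subseteq> {a..b}"
  using option_set_gmvs[OF assms] top_top[OF assms(2) finite_nonempty_alternatives]
    ballot_range[of "voters n - {i}"] ballot_range[of "{i}"] assms(1) by auto

lemma dictatorial_if_extreme_ballots:
  assumes i: "i \<in> voters n" and "p (voters n - {i}) = b" "p {i} = a"
  shows "dictatorial n {a..b} (gmvs n {a..b} p)"
  unfolding dictatorial_def
proof (intro bexI[OF _ i] allI impI)
  fix P assume "is_profile n {a..b} P"
  then have "top {a..b} (P i) \<in> {a..b}"
    using i top_top[OF _ finite_nonempty_alternatives] unfolding is_profile_def by blast
  then show "gmvs n {a..b} p P = top {a..b} (P i)"
    using gmvs_between[OF i, of "{a..b}" P] assms(2,3) by simp
qed

lemma not_NOM_if_worst_outcome_avoidable: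
  assumes i: "i \<in> voters n" and range: "t \<in> {a..b}" "t' \<in> {a..b}" "y \<in> {a..b}"
    and "s \<noteq> t"
    and outcome: "min (max t y) (min (max (p (voters n - {i})) y) (max (p {i}) t)) = s"
    and avoided: "s \<notin> {min t' (p (voters n - {i})) .. max t' (p {i})}"
  shows "\<not> NOM n {a..b} (gmvs n {a..b} p)"
proof -
  define R where "R = pref_top_bottom {a..b} t s"
  define R' where "R' = pref_top_bottom {a..b} t' t'"
  define P where "P = (\<lambda>j::nat. pref_top_bottom {a..b} y y)"
  let ?f = "gmvs n {a..b} p"
  let ?O = "option_set n {a..b} ?f i R" and ?O' = "option_set n {a..b} ?f i R'"
  have prefs: "is_pref {a..b} R" "is_pref {a..b} R'"
    unfolding R_def R'_def by (simp_all add: is_pref_pref_top_bottom)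
  have O': "?O' = {min t' (p (voters n - {i})) .. max t' (p {i})}"
    using option_set_gmvs[OF i prefs(2)] range(2)
    unfolding R'_def by (simp add: top_pref_top_bottom)
  note option_set_range = option_set_gmvs_subset[OF i]
  have outcome_in_option_set: "?f (P(i := Q)) \<in> option_set n {a..b} ?f i Q" for Q
    unfolding P_def using option_setI[OF is_profile_const_top] .
  have "?f (P(i := R)) = s"
    using gmvs_two_tops[OF i range(1)] range outcome
    unfolding R_def P_def by (simp add: top_pref_top_bottom)
  then have s: "s \<in> ?O"
    using outcome_in_option_set[of R] by simp
  have s_bottom: "(x, s) \<in> R" if "x \<in> {a..b}" "x \<noteq> s" for x
    unfolding R_def
    using that s option_set_range[OF prefs(1)] \<open>s \<noteq> t\<close> by (intro pref_top_bottom_bottom) auto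
  have "?f (P(i := R')) \<in> ?O' - {s}"
    using outcome_in_option_set[of R'] avoided O' by simp
  then have "(?f (P(i := R')), ?f (P(i := R))) \<in> R"
    using \<open>?f (P(i := R)) = s\<close> option_set_range[OF prefs(2)] s_bottom by auto
  then have "manipulation n {a..b} ?f i R R'"
    unfolding manipulation_def P_def using is_profile_const_top by blast
  moreover have "worst_el R ?O = s"
    using s s_bottom option_set_range[OF prefs(1)] by (intro worst_el_eqI[OF prefs(1)]) auto
  moreover have "worst_el R ?O' \<in> ?O' - {s}"
    using worst_el_worst[OF prefs(1) finite_nonempty_alternatives(1) option_set_range[OF prefs(2)]]
      outcome_in_option_set[of R'] avoided O' by auto
  ultimately have "obvious_manipulation n {a..b} ?f i R R'"
    unfolding obvious_manipulation_def using s_bottom option_set_range[OF prefs(2)] by auto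
  then show ?thesis
    unfolding NOM_def using i prefs by blast
qed

lemma no_obvious_manipulation_if_ballots_near_extremes:
  assumes i: "i \<in> voters n" and lo: "p (voters n - {i}) \<le> a + 1" and hi: "b \<le> p {i} + 1"
    and R: "is_pref {a..b} R" and R': "is_pref {a..b} R'"
  shows "\<not> obvious_manipulation n {a..b} (gmvs n {a..b} p) i R R'"
proof -
  let ?f = "gmvs n {a..b} p" and ?t = "top {a..b} R" and ?t' = "top {a..b} R'"
  let ?O = "option_set n {a..b} ?f i R" and ?O' = "option_set n {a..b} ?f i R'"
  have O: "?O = {min ?t (p (voters n - {i})) .. max ?t (p {i})}"
    and O': "?O' = {min ?t' (p (voters n - {i})) .. max ?t' (p {i})}"
    using option_set_gmvs[OF i R] option_set_gmvs[OF i R'] .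
  have t: "?t \<in> {a..b}" "\<forall>x\<in>{a..b}. x \<noteq> ?t \<longrightarrow> (?t, x) \<in> R"
    and t': "?t' \<in> {a..b}"
    using top_top[OF R finite_nonempty_alternatives] top_top[OF R' finite_nonempty_alternatives]
    by blast+
  have range: "?O \<subseteq> {a..b}" "?O' \<subseteq> {a..b}"
    using option_set_gmvs_subset[OF i] R R' by blast+
  have "?t \<in> ?O"
    using O by simp
  then have "best_el R ?O = ?t"
    by (rule best_el_eqI[OF R]) (use t(2) range(1) in blast)
  then have not_best: "(best_el R ?O', best_el R ?O) \<notin> R"
    using not_pref_over_top[OF R finite_nonempty_alternatives] by simp
  define w where "w = worst_el R ?O"
  have "w \<in> ?O"
    unfolding w_def using worst_el_worst[OF R finite_nonempty_alternatives(1) range(1)] O by auto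
  have lost_option_is_top: "w = ?t" if "w \<notin> ?O'"
    using \<open>w \<in> ?O\<close> that O O' t(1) lo hi by auto
  obtain z where "z \<in> ?O'" "z = w \<or> (w, z) \<in> R"
  proof (cases "w \<in> ?O'")
    case False
    then have "?t' = w \<or> (w, ?t') \<in> R"
      using lost_option_is_top t t' by blast
    moreover have "?t' \<in> ?O'"
      using O' by simp
    ultimately show thesis
      using that by blast
  qed (use that in blast)
  then have not_worst: "(worst_el R ?O', worst_el R ?O) \<notin> R"
    unfolding w_def by (intro worst_el_not_pref_over[OF R finite_nonempty_alternatives(1) range(2)])
  show ?thesis
    using not_best not_worst unfolding obvious_manipulation_def by blast
qed

lemma ballot_without_le_Suc_if_NOM:
  assumes NOM: "NOM n {a..b} (gmvs n {a..b} p)"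
    and non_dictatorial: "\<not> dictatorial n {a..b} (gmvs n {a..b} p)" and i: "i \<in> voters n"
  shows "p (voters n - {i}) \<le> a + 1"
proof (rule ccontr)
  let ?L = "p (voters n - {i})" and ?U = "p {i}"
  assume "\<not> ?L \<le> a + 1"
  then have L: "a + 1 < ?L" "?L \<le> b"
    using ballot_range[of "voters n - {i}"] by auto
  have U: "a \<le> ?U"
    using ballot_range[of "{i}"] i by auto
  show False
  proof (cases "?U = a")
    case False
    have "\<not> NOM n {a..b} (gmvs n {a..b} p)"
      by (rule not_NOM_if_worst_outcome_avoidable[OF i, of a ?L "a + 1" "a + 1"])
        (use L U False in auto)
    then show False
      using NOM by contradiction
  next
    case True
    have "?L \<noteq> b"
      using True dictatorial_if_extreme_ballots[OF i] non_dictatorial by blast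
    have "\<not> NOM n {a..b} (gmvs n {a..b} p)"
      by (rule not_NOM_if_worst_outcome_avoidable[OF i, of b a ?L ?L])
        (use L True \<open>?L \<noteq> b\<close> in auto)
    then show False
      using NOM by contradiction
  qed
qed

lemma ballot_single_ge_pred_if_NOM:
  assumes NOM: "NOM n {a..b} (gmvs n {a..b} p)"
    and non_dictatorial: "\<not> dictatorial n {a..b} (gmvs n {a..b} p)" and i: "i \<in> voters n"
  shows "b \<le> p {i} + 1"
proof (rule ccontr)
  let ?L = "p (voters n - {i})" and ?U = "p {i}"
  assume "\<not> b \<le> ?U + 1"
  then have U: "a \<le> ?U" "?U + 1 < b"
    using ballot_range[of "{i}"] i by auto
  have L: "?L \<le> b"
    using ballot_range[of "voters n - {i}"] by auto
  show False
  proof (cases "?L = b")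
    case False
    then have "?L \<le> b - 1"
      using L by simp
    have "\<not> NOM n {a..b} (gmvs n {a..b} p)"
      by (rule not_NOM_if_worst_outcome_avoidable[OF i, of b ?U "b - 1" "b - 1"])
        (use U \<open>?L \<le> b - 1\<close> in auto)
    then show False
      using NOM by contradiction
  next
    case True
    have "?U \<noteq> a"
      using True dictatorial_if_extreme_ballots[OF i] non_dictatorial by blast
    have "\<not> NOM n {a..b} (gmvs n {a..b} p)"
      by (rule not_NOM_if_worst_outcome_avoidable[OF i, of a b ?U ?U])
        (use U True \<open>?U \<noteq> a\<close> in auto)
    then show False
      using NOM by contradiction
  qed
qed

end

theorem theorem3:
  fixes n a b :: nat and p :: "nat set \<Rightarrow> nat"
  assumes "n \<ge> 2"
    and "a < b"
    and "monotonic_ballots n a b p"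
    and "\<not> dictatorial n {a..b} (gmvs n {a..b} p)"
  shows "NOM n {a..b} (gmvs n {a..b} p) \<longleftrightarrow>
    (\<forall>i\<in>voters n. p (voters n - {i}) \<in> {a, a + 1} \<and> p {i} \<in> {b - 1, b})"
proof -
  interpret monotonic_ballot_scheme n a b p
    using assms(2,3) by unfold_locales simp_all
  show ?thesis
  proof
    assume NOM: "NOM n {a..b} (gmvs n {a..b} p)"
    show "\<forall>i\<in>voters n. p (voters n - {i}) \<in> {a, a + 1} \<and> p {i} \<in> {b - 1, b}"
    proof
      fix i assume i: "i \<in> voters n"
      have "a \<le> p (voters n - {i})" "p {i} \<le> b"
        using ballot_range[of "voters n - {i}"] ballot_range[of "{i}"] i by auto
      then show "p (voters n - {i}) \<in> {a, a + 1} \<and> p {i} \<in> {b - 1, b}"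
        using ballot_without_le_Suc_if_NOM[OF NOM assms(4) i]
          ballot_single_ge_pred_if_NOM[OF NOM assms(4) i] by auto
    qed
  next
    assume "\<forall>i\<in>voters n. p (voters n - {i}) \<in> {a, a + 1} \<and> p {i} \<in> {b - 1, b}"
    then show "NOM n {a..b} (gmvs n {a..b} p)"
      unfolding NOM_def using no_obvious_manipulation_if_ballots_near_extremes by fastforce
  qed
qed

end
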